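(* Let $\{\alpha^k_{\mathbf y}\}_{k\ge0}$ satisfy $\alpha^k_{\mathbf y}\in[\underline{\alpha}_{\mathbf y},\overline{\alpha}_{\mathbf y}]\subset(0,2/L_f)$ for all $k$, and for each $K\ge1$ let $(\mathbf x_K,\mathbf z_K)\in\arg\min_{\mathbf x\in\mathcal X,\mathbf z\in\mathcal Y}\varphi_K(\mathbf x,\mathbf z)$ (assumed to exist). Then: (1) every limit point $\bar{\mathbf x}$ of $\{\mathbf x_K\}$ satisfies $\bar{\mathbf x}\in\arg\min_{\mathbf x\in\mathcal X}\varphi(\mathbf x)$; (2) $\inf_{\mathbf x\in\mathcal X,\mathbf z\in\mathcal Y}\varphi_K(\mathbf x,\mathbf z)\to\inf_{\mathbf x\in\mathcal X}\varphi(\mathbf x)$ as $K\to\infty$.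
   Context: Let $F,f:\mathbb R^n\times\mathbb R^m\to\mathbb R$ and $\mathcal X\subset\mathbb R^n$, $\mathcal Y\subset\mathbb R^m$. Assumptions: (i) $F$ and $f$ are continuous; (ii) $f$ is differentiable, $\nabla f$ is continuous, and there is $L_f>0$ such that for every $\mathbf x\in\mathcal X$ the map $\mathbf y\mapsto\nabla_{\mathbf y}f(\mathbf x,\mathbf y)$ is $L_f$-Lipschitz; (iii) $\mathcal X$ and $\mathcal Y$ are nonempty convex compact sets; (iv) $\mathcal S(\mathbf x):=\arg\min_{\mathbf y\in\mathcal Y}f(\mathbf x,\mathbf y)$ is nonempty for every $\mathbf x\in\mathcal X$; (v) for any $(\bar{\mathbf x},\bar{\mathbf y})$ minimizing $F(\mathbf x,\mathbf y)$ over the constraints $\mathbf x\in\mathcal X$, $\mathbf y\in\mathcal Y$, $\mathbf y\in\hat{\mathcal S}(\mathbf x)$, it holds that $\bar{\mathbf y}\in\mathcal S(\bar{\mathbf x})$. $\mathtt{Proj}_{\mathcal Y}$ denotes Euclidean projection onto $\mathcal Y$. The set of lower-level stationary points is $\hat{\mathcal S}(\mathbf x):=\{\mathbf y\in\mathcal Y: 0\in\nabla_{\mathbf y}f(\mathbf x,\mathbf y)+\mathcal N_{\mathcal Y}(\mathbf y)\}$, where $\mathcal N_{\mathcal Y}(\mathbf y)$ is the normal cone of $\mathcal Y$ at $\mathbf y$. Define $\varphi(\mathbf x):=\inf_{\mathbf y\in\mathcal S(\mathbf x)}F(\mathbf x,\mathbf y)$. Given step sizes $\{\alpha^k_{\mathbf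 y}\}$, for $\mathbf x\in\mathcal X$, $\mathbf z\in\mathcal Y$ define $\mathbf y_0(\mathbf x,\mathbf z)=\mathbf z$ and $\mathbf y_{k+1}(\mathbf x,\mathbf z)=\mathtt{Proj}_{\mathcal Y}\big(\mathbf y_k(\mathbf x,\mathbf z)-\alpha^k_{\mathbf y}\nabla_{\mathbf y}f(\mathbf x,\mathbf y_k(\mathbf x,\mathbf z))\big)$ for $k\ge0$. For $K\ge1$ define $\varphi_K(\mathbf x,\mathbf z):=\max_{1\le k\le K}F(\mathbf x,\mathbf y_k(\mathbf x,\mathbf z))$. *)

theory Defs
  imports "HOL-Analysis.Analysis"
begin

text \<open>The full gradient of f is a function grad, and the partial
gradient in y is the second component of grad.\<close>

definition normal_cone :: "'b::real_inner set \<Rightarrow> 'b \<Rightarrow> 'b set" where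
  "normal_cone C y = {v. \<forall>z\<in>C. inner v (z - y) \<le> 0}"

definition LL_sol :: "('a \<times> 'b \<Rightarrow> real) \<Rightarrow> 'b set \<Rightarrow> 'a \<Rightarrow> 'b set" where
  "LL_sol f Y x = {y \<in> Y. \<forall>y'\<in>Y. f (x, y) \<le> f (x, y')}"

definition LL_stat :: "('a \<times> 'b \<Rightarrow> 'a \<times> 'b) \<Rightarrow> 'b::real_inner set \<Rightarrow> 'a \<Rightarrow> 'b set" where
  "LL_stat grad Y x = {y \<in> Y. \<exists>v\<in>normal_cone Y y. snd (grad (x, y)) + v = 0}"

primrec pgd_iter :: "'b::euclidean_space set \<Rightarrow> ('a \<times> 'b \<Rightarrow> 'a \<times> 'b) \<Rightarrow> (nat \<Rightarrow> real)
    \<Rightarrow> 'a \<Rightarrow> 'b \<Rightarrow> nat \<Rightarrow> 'b" where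
  "pgd_iter Y grad alpha x z 0 = z"
| "pgd_iter Y grad alpha x z (Suc k) =
     closest_point Y (pgd_iter Y grad alpha x z k
                      - alpha k *\<^sub>R snd (grad (x, pgd_iter Y grad alpha x z k)))"

definition phi :: "('a \<times> 'b \<Rightarrow> real) \<Rightarrow> ('a \<times> 'b \<Rightarrow> real) \<Rightarrow> 'b set \<Rightarrow> 'a \<Rightarrow> real" where
  "phi F f Y x = Inf ((\<lambda>y. F (x, y)) ` LL_sol f Y x)"

definition phiK :: "('a \<times> 'b \<Rightarrow> real) \<Rightarrow> 'b::euclidean_space set \<Rightarrow> ('a \<times> 'b \<Rightarrow> 'a \<times> 'b)
    \<Rightarrow> (nat \<Rightarrow> real) \<Rightarrow> nat \<Rightarrow> 'a \<Rightarrow> 'b \<Rightarrow> real" where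
  "phiK F Y grad alpha K x z = Max ((\<lambda>k. F (x, pgd_iter Y grad alpha x z k)) ` {1..K})"

end

theory Submission
  imports Defs "HOL-Real_Asymp.Real_Asymp"
begin

(* Along each projected gradient step the lower-level objective f(x, .) drops by at least
   c |y_{k+1} - y_k|^2 with c = 1/ahi - L_f/2 > 0, so among the first K steps started at
   (x_K, z_K) the shortest one, say the k-th, has squared length O(1/K). Started at a
   lower-level stationary point the iteration does not move, hence
   F(x_K, y_k) <= phi_K(x_K, z_K) <= F(x, y) for every stationary pair (x, y).
   A cluster point (xb, yb) of (x_K, y_k) is a fixed point of the continuous projected gradient
   map, i.e. stationary, and minimises F over all stationary pairs; assumption (v) makes yb
   lower-level optimal, so phi(xb) = F(xb, yb) = inf phi. Thus every subsequence of the optimal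
   values of phi_K has a further subsequence converging to inf phi. *)

lemma GDERIV_along_line:
  fixes g :: "'a::real_inner \<Rightarrow> real"
  assumes "GDERIV g (y + t *\<^sub>R d) :> G"
  shows "((\<lambda>t. g (y + t *\<^sub>R d)) has_real_derivative inner G d) (at t)"
proof -
  have "((\<lambda>t. y + t *\<^sub>R d) has_derivative (\<lambda>h. h *\<^sub>R d)) (at t)"
    by (auto intro!: derivative_eq_intros)
  from diff_chain_at[OF this assms[unfolded gderiv_def]]
  have "((\<lambda>t. g (y + t *\<^sub>R d)) has_derivative (\<lambda>h. inner (h *\<^sub>R d) G)) (at t)"
    by (simp add: o_def)
  moreover have "(\<lambda>h. inner (h *\<^sub>R d) G) = (*) (inner G d)"
    by (rule ext) (simp add: inner_commute)
  ultimately show ?thesis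
    unfolding has_field_derivative_def by simp
qed

lemma GDERIV_partial_snd:
  fixes f :: "'a::real_inner \<times> 'b::real_inner \<Rightarrow> real"
  assumes "GDERIV f (x, y) :> G"
  shows "GDERIV (\<lambda>y. f (x, y)) y :> snd G"
proof -
  have "((\<lambda>y. (x, y)) has_derivative (\<lambda>h. (0, h))) (at y)"
    by (auto intro!: derivative_eq_intros)
  from diff_chain_at[OF this assms[unfolded gderiv_def]]
  have "((\<lambda>y. f (x, y)) has_derivative (\<lambda>h. inner (0, h) G)) (at y)"
    by (simp add: o_def)
  moreover have "(\<lambda>h. inner (0, h) G) = (\<lambda>h. inner h (snd G))"
    by (cases G) simp
  ultimately show ?thesis
    unfolding gderiv_def by simp
qed

lemma descent_lemma:
  fixes g :: "'a::real_inner \<Rightarrow> real"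
  assumes grad: "\<And>y. GDERIV g y :> g' y"
    and Lip: "\<And>y1 y2. norm (g' y1 - g' y2) \<le> L * norm (y1 - y2)"
  shows "g y' \<le> g y + inner (g' y) (y' - y) + L / 2 * (norm (y' - y))\<^sup>2"
proof -
  define d where "d = y' - y"
  define \<phi> where "\<phi> t = g (y + t *\<^sub>R d) - t * inner (g' y) d - L / 2 * t\<^sup>2 * (norm d)\<^sup>2" for t
  define \<phi>' where "\<phi>' t = inner (g' (y + t *\<^sub>R d)) d - inner (g' y) d - L * t * (norm d)\<^sup>2" for t
  have "(\<phi> has_real_derivative \<phi>' t) (at t)" for t
    unfolding \<phi>_def \<phi>'_def
    by (rule derivative_eq_intros GDERIV_along_line[OF grad] refl)+ simp
  then obtain t where t: "0 < t" "t < 1" "\<phi> 1 - \<phi> 0 = (1 - 0) * \<phi>' t"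
    using MVT2[of 0 1 \<phi> \<phi>'] by auto
  have "inner (g' (y + t *\<^sub>R d)) d - inner (g' y) d = inner (g' (y + t *\<^sub>R d) - g' y) d"
    by (simp add: inner_diff_left)
  also have "\<dots> \<le> norm (g' (y + t *\<^sub>R d) - g' y) * norm d"
    by (rule norm_cauchy_schwarz)
  also have "\<dots> \<le> L * norm (t *\<^sub>R d) * norm d"
    using Lip[of "y + t *\<^sub>R d" y] by (simp add: mult_right_mono)
  also have "\<dots> = L * t * (norm d)\<^sup>2"
    using t by (simp add: power2_eq_square)
  finally have "\<phi> 1 \<le> \<phi> 0"
    using t unfolding \<phi>'_def by simp
  then show ?thesis
    unfolding \<phi>_def d_def by (simp add: algebra_simps)
qed

lemma minimizer_imp_neg_gradient_normal:
  fixes g :: "'a::real_inner \<Rightarrow> real"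
  assumes Y: "convex Y" "y \<in> Y" and min: "\<And>z. z \<in> Y \<Longrightarrow> g y \<le> g z"
    and grad: "GDERIV g y :> G"
  shows "- G \<in> normal_cone Y y"
  unfolding normal_cone_def
proof (intro CollectI ballI)
  fix z assume z: "z \<in> Y"
  show "inner (- G) (z - y) \<le> 0"
  proof (rule ccontr)
    assume "\<not> ?thesis"
    then have neg: "inner G (z - y) < 0" by simp
    have "((\<lambda>t. g (y + t *\<^sub>R (z - y))) has_real_derivative inner G (z - y)) (at 0)"
      by (rule GDERIV_along_line) (use grad in simp)
    from DERIV_neg_dec_right[OF this neg] obtain e where e: "e > 0"
      "\<And>h. h > 0 \<Longrightarrow> h < e \<Longrightarrow> g (y + h *\<^sub>R (z - y)) < g y"
      by auto
    define h where "h = min (e / 2) 1"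
    have h: "0 < h" "h < e" "h \<le> 1"
      using e by (auto simp: h_def)
    have "y + h *\<^sub>R (z - y) = (1 - h) *\<^sub>R y + h *\<^sub>R z"
      by (simp add: algebra_simps)
    also have "\<dots> \<in> Y"
      using convexD_alt[OF Y z, of h] h by auto
    finally show False
      using min e(2)[OF h(1,2)] by fastforce
  qed
qed

lemma closest_point_eq_iff_normal_cone:
  fixes Y :: "'a::euclidean_space set"
  assumes Y: "convex Y" "closed Y" "y \<in> Y" and a: "a > 0"
  shows "closest_point Y (y + a *\<^sub>R v) = y \<longleftrightarrow> v \<in> normal_cone Y y"
proof
  assume fixed: "closest_point Y (y + a *\<^sub>R v) = y"
  have "a * inner v (z - y) \<le> 0" if "z \<in> Y" for z
    using closest_point_dot[OF Y(1,2) that, of "y + a *\<^sub>R v"] by (simp add: fixed)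
  then show "v \<in> normal_cone Y y"
    using a by (auto simp: normal_cone_def mult_le_0_iff)
next
  assume v: "v \<in> normal_cone Y y"
  have "dist (y + a *\<^sub>R v) y \<le> dist (y + a *\<^sub>R v) z" if z: "z \<in> Y" for z
  proof -
    have "a * inner v (z - y) \<le> 0"
      using v z a by (simp add: normal_cone_def mult_nonneg_nonpos)
    with inner_ge_zero[of "z - y"] have "inner (a *\<^sub>R v) (a *\<^sub>R v) \<le> inner (a *\<^sub>R v - (z - y)) (a *\<^sub>R v - (z - y))"
      by (simp add: inner_commute algebra_simps)
    then have "norm (a *\<^sub>R v) \<le> norm (a *\<^sub>R v - (z - y))"
      by (simp only: norm_le)
    moreover have "y + a *\<^sub>R v - z = a *\<^sub>R v - (z - y)"
      by (simp add: algebra_simps)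
    ultimately show ?thesis
      by (simp only: dist_norm add_diff_cancel_left')
  qed
  then show "closest_point Y (y + a *\<^sub>R v) = y"
    using closest_point_unique[OF Y] by auto
qed

lemma LL_stat_iff_normal_cone:
  "y \<in> LL_stat grad Y x \<longleftrightarrow> y \<in> Y \<and> - snd (grad (x, y)) \<in> normal_cone Y y"
  unfolding LL_stat_def by (auto simp: add_eq_0_iff)

lemma LL_stat_iff_fixed_point:
  fixes Y :: "'b::euclidean_space set"
  assumes Y: "convex Y" "closed Y" "Y \<noteq> {}" and a: "a > 0"
  shows "y \<in> LL_stat grad Y x \<longleftrightarrow> closest_point Y (y - a *\<^sub>R snd (grad (x, y))) = y"
proof (cases "y \<in> Y")
  case True
  then show ?thesis
    using closest_point_eq_iff_normal_cone[OF Y(1,2) True a, of "- snd (grad (x, y))"]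
    by (simp add: LL_stat_iff_normal_cone True)
next
  case False
  then show ?thesis
    using closest_point_in_set[OF Y(2,3)] by (metis LL_stat_iff_normal_cone)
qed

lemma LL_sol_subset_LL_stat:
  assumes grad: "\<And>p. GDERIV f p :> grad p" and Y: "convex Y"
  shows "LL_sol f Y x \<subseteq> LL_stat grad Y x"
proof
  fix y assume "y \<in> LL_sol f Y x"
  then have y: "y \<in> Y" "\<And>z. z \<in> Y \<Longrightarrow> f (x, y) \<le> f (x, z)"
    by (auto simp: LL_sol_def)
  have "- snd (grad (x, y)) \<in> normal_cone Y y"
    by (rule minimizer_imp_neg_gradient_normal[OF Y y GDERIV_partial_snd[OF grad]])
  then show "y \<in> LL_stat grad Y x"
    using y(1) by (simp add: LL_stat_iff_normal_cone)
qed

lemma projected_gradient_decrease: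
  fixes g :: "'a::euclidean_space \<Rightarrow> real"
  assumes grad: "\<And>y. GDERIV g y :> g' y"
    and Lip: "\<And>y1 y2. norm (g' y1 - g' y2) \<le> L * norm (y1 - y2)"
    and Y: "convex Y" "closed Y" "y \<in> Y" and a: "a > 0"
  defines "u \<equiv> closest_point Y (y - a *\<^sub>R g' y)"
  shows "g u \<le> g y - (1 / a - L / 2) * (norm (u - y))\<^sup>2"
proof -
  have "inner (y - a *\<^sub>R g' y - u) (y - u) \<le> 0"
    unfolding u_def by (rule closest_point_dot[OF Y])
  moreover have "inner (y - a *\<^sub>R g' y - u) (y - u) = (norm (u - y))\<^sup>2 + a * inner (g' y) (u - y)"
    by (simp add: inner_commute power2_norm_eq_inner algebra_simps)
  ultimately have "inner (g' y) (u - y) \<le> - (norm (u - y))\<^sup>2 / a"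
    using a by (simp add: field_simps)
  moreover have "g u \<le> g y + inner (g' y) (u - y) + L / 2 * (norm (u - y))\<^sup>2"
    by (rule descent_lemma[OF grad Lip])
  ultimately show ?thesis
    by (simp add: algebra_simps diff_divide_distrib)
qed

lemma pgd_iter_in:
  assumes "closed Y" "Y \<noteq> {}" "z \<in> Y"
  shows "pgd_iter Y grad alpha x z k \<in> Y"
  using assms by (cases k) (simp_all add: closest_point_in_set)

lemma pgd_iter_stationary:
  assumes Y: "convex Y" "closed Y" "Y \<noteq> {}" and alpha: "\<And>k. alpha k > 0"
    and y: "y \<in> LL_stat grad Y x"
  shows "pgd_iter Y grad alpha x y k = y"
proof (induction k)
  case (Suc k)
  have "closest_point Y (y - alpha k *\<^sub>R snd (grad (x, y))) = y"
    using LL_stat_iff_fixed_point[OF Y alpha[of k], where y = y and grad = grad and x = x] y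
    by simp
  with Suc show ?case by simp
qed simp

lemma phiK_stationary:
  assumes Y: "convex Y" "closed Y" "Y \<noteq> {}" and alpha: "\<And>k. alpha k > 0"
    and y: "y \<in> LL_stat grad Y x" and K: "K \<ge> 1"
  shows "phiK F Y grad alpha K x y = F (x, y)"
proof -
  have "(\<lambda>k. F (x, pgd_iter Y grad alpha x y k)) ` {1..K} = {F (x, y)}"
    using K by (auto simp: pgd_iter_stationary[OF Y alpha y])
  then show ?thesis
    unfolding phiK_def by simp
qed

lemma compact_LL_sol:
  assumes f: "continuous_on UNIV f" and Y: "compact Y"
  shows "compact (LL_sol f Y x)"
proof -
  have "continuous_on UNIV (\<lambda>y. f (x, y))"
    by (intro continuous_on_compose2[OF f] continuous_intros) auto
  then have "closed (\<Inter>z\<in>Y. {y. f (x, y) \<le> f (x, z)})"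
    by (intro closed_INT ballI closed_Collect_le continuous_on_const)
  moreover have "LL_sol f Y x = Y \<inter> (\<Inter>z\<in>Y. {y. f (x, y) \<le> f (x, z)})"
    unfolding LL_sol_def by auto
  ultimately show ?thesis
    using compact_Int_closed[OF Y] by simp
qed

lemma phi_attained:
  assumes F: "continuous_on UNIV F" and f: "continuous_on UNIV f" and Y: "compact Y"
    and ne: "LL_sol f Y x \<noteq> {}"
  obtains y where "y \<in> LL_sol f Y x" "phi F f Y x = F (x, y)"
    "\<And>y'. y' \<in> LL_sol f Y x \<Longrightarrow> phi F f Y x \<le> F (x, y')"
proof -
  have "continuous_on (LL_sol f Y x) (\<lambda>y. F (x, y))"
    by (intro continuous_on_compose2[OF F] continuous_intros) auto
  then obtain y where y: "y \<in> LL_sol f Y x" "\<And>y'. y' \<in> LL_sol f Y x \<Longrightarrow> F (x, y) \<le> F (x, y')"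
    using continuous_attains_inf[OF compact_LL_sol[OF f Y] ne] by blast
  then have "phi F f Y x = F (x, y)"
    unfolding phi_def by (intro cInf_eq_minimum) auto
  with y that show ?thesis by simp
qed

lemma ex_decrement_le_average:
  fixes s d :: "nat \<Rightarrow> real"
  assumes mn: "m < n" and dec: "\<And>k. m \<le> k \<Longrightarrow> k < n \<Longrightarrow> d k \<le> s k - s (Suc k)"
  shows "\<exists>k\<in>{m..<n}. d k \<le> (s m - s n) / real (n - m)"
proof (rule ccontr)
  define avg where "avg = (s m - s n) / real (n - m)"
  assume "\<not> ?thesis"
  then have "(\<Sum>k\<in>{m..<n}. avg) < (\<Sum>k\<in>{m..<n}. d k)"
    using mn by (intro sum_strict_mono) (auto simp: avg_def not_le)
  also have "\<dots> \<le> (\<Sum>k\<in>{m..<n}. s k - s (Suc k))"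
    using dec by (intro sum_mono) auto
  also have "\<dots> = s m - s n"
    using sum_Suc_diff'[of m n "\<lambda>k. - s k"] mn by simp
  finally show False
    using mn by (simp add: avg_def)
qed

lemma LIMSEQ_if_subseq_subseq:
  fixes X :: "nat \<Rightarrow> 'a::topological_space"
  assumes sub: "\<And>r :: nat \<Rightarrow> nat. strict_mono r \<Longrightarrow> \<exists>s. strict_mono s \<and> (X \<circ> r \<circ> s) \<longlonglongrightarrow> L"
  shows "X \<longlonglongrightarrow> L"
proof (rule topological_tendstoI)
  fix U assume U: "open U" "L \<in> U"
  show "eventually (\<lambda>n. X n \<in> U) sequentially"
  proof (rule ccontr)
    assume "\<not> ?thesis"
    then have "infinite {n. X n \<notin> U}"
      by (simp add: not_eventually frequently_cofinite[symmetric] cofinite_eq_sequentially)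
    then obtain r :: "nat \<Rightarrow> nat" where r: "strict_mono r" "\<And>n. X (r n) \<notin> U"
      using infinite_enumerate by blast
    obtain s where "(X \<circ> r \<circ> s) \<longlonglongrightarrow> L"
      using sub[OF r(1)] by blast
    then have "eventually (\<lambda>n. X (r (s n)) \<in> U) sequentially"
      using U topological_tendstoD by fastforce
    with r(2) show False by simp
  qed
qed

locale pgd_bilevel =
  fixes F f :: "'a::euclidean_space \<times> 'b::euclidean_space \<Rightarrow> real"
    and grad :: "'a \<times> 'b \<Rightarrow> 'a \<times> 'b"
    and X :: "'a set" and Y :: "'b set"
    and Lf alo ahi :: real and alpha :: "nat \<Rightarrow> real"
    and xK :: "nat \<Rightarrow> 'a" and zK :: "nat \<Rightarrow> 'b"
  assumes contF: "continuous_on UNIV F"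
    and contf: "continuous_on UNIV f"
    and grad_f: "\<And>p. GDERIV f p :> grad p"
    and cont_grad: "continuous_on UNIV grad"
    and Lf_pos: "Lf > 0"
    and Lip: "\<And>x y1 y2. x \<in> X \<Longrightarrow>
                 norm (snd (grad (x, y1)) - snd (grad (x, y2))) \<le> Lf * norm (y1 - y2)"
    and X: "compact X"
    and Y: "convex Y" "closed Y" "compact Y" "Y \<noteq> {}"
    and S_ne: "\<And>x. x \<in> X \<Longrightarrow> LL_sol f Y x \<noteq> {}"
    and stat_opt: "\<And>xb yb. xb \<in> X \<Longrightarrow> yb \<in> LL_stat grad Y xb \<Longrightarrow>
                     (\<forall>x\<in>X. \<forall>y\<in>LL_stat grad Y x. F (xb, yb) \<le> F (x, y)) \<Longrightarrow>
                     yb \<in> LL_sol f Y xb"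
    and alo_pos: "0 < alo" and ahi: "ahi < 2 / Lf"
    and alpha: "\<And>k. alo \<le> alpha k" "\<And>k. alpha k \<le> ahi"
    and min_K: "\<And>K. K \<ge> 1 \<Longrightarrow> xK K \<in> X \<and> zK K \<in> Y \<and>
                  (\<forall>x\<in>X. \<forall>z\<in>Y. phiK F Y grad alpha K (xK K) (zK K) \<le> phiK F Y grad alpha K x z)"
begin

abbreviation iter :: "'a \<Rightarrow> 'b \<Rightarrow> nat \<Rightarrow> 'b" where
  "iter \<equiv> pgd_iter Y grad alpha"

lemma alpha_pos: "alpha k > 0"
  using alo_pos alpha(1)[of k] by linarith

definition descent_rate :: real where
  "descent_rate = 1 / ahi - Lf / 2"

lemma descent_rate_pos: "descent_rate > 0"
proof -
  have "0 < ahi" using alo_pos alpha[of 0] by linarith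
  moreover have "ahi * Lf < 2" using ahi Lf_pos by (simp add: field_simps)
  ultimately show ?thesis
    by (simp add: descent_rate_def field_simps)
qed

lemma iter_decrease:
  assumes x: "x \<in> X" and z: "z \<in> Y"
  shows "descent_rate * (norm (iter x z (Suc k) - iter x z k))\<^sup>2
           \<le> f (x, iter x z k) - f (x, iter x z (Suc k))"
proof -
  have "1 / ahi \<le> 1 / alpha k"
    using alpha_pos alpha(2) by (simp add: frac_le)
  then have "descent_rate * (norm (iter x z (Suc k) - iter x z k))\<^sup>2
               \<le> (1 / alpha k - Lf / 2) * (norm (iter x z (Suc k) - iter x z k))\<^sup>2"
    unfolding descent_rate_def by (intro mult_right_mono) auto
  also have "\<dots> \<le> f (x, iter x z k) - f (x, iter x z (Suc k))"
    using projected_gradient_decrease[where g = "\<lambda>y. f (x, y)" and g' = "\<lambda>y. snd (grad (x, y))",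
        OF GDERIV_partial_snd[OF grad_f] Lip[OF x] Y(1,2)
        pgd_iter_in[OF Y(2,4) z, where grad = grad and alpha = alpha and x = x and k = k]
        alpha_pos[of k]]
    by simp
  finally show ?thesis .
qed

definition phiK_min :: "nat \<Rightarrow> real" where
  "phiK_min K = phiK F Y grad alpha K (xK K) (zK K)"

definition step_len :: "nat \<Rightarrow> nat \<Rightarrow> real" where
  "step_len K k = norm (iter (xK K) (zK K) (Suc k) - iter (xK K) (zK K) k)"

definition shortest_step :: "nat \<Rightarrow> nat" where
  "shortest_step K = arg_min_on (step_len K) {1..<K}"

definition y_short :: "nat \<Rightarrow> 'b" where
  "y_short K = iter (xK K) (zK K) (shortest_step K)"

lemma shortest_step:
  assumes "K \<ge> 2"
  shows "shortest_step K \<in> {1..<K}" "\<And>k. k \<in> {1..<K} \<Longrightarrow> step_len K (shortest_step K) \<le> step_len K k"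
proof -
  have fin: "finite {1..<K}" "{1..<K} \<noteq> {}"
    using assms by auto
  show "shortest_step K \<in> {1..<K}"
    unfolding shortest_step_def by (rule arg_min_if_finite(1)[OF fin])
  show "step_len K (shortest_step K) \<le> step_len K k" if "k \<in> {1..<K}" for k
    unfolding shortest_step_def by (rule arg_min_least[OF fin that])
qed

lemma y_short_in:
  assumes "K \<ge> 2"
  shows "y_short K \<in> Y"
  unfolding y_short_def using min_K[of K] assms by (intro pgd_iter_in[OF Y(2,4)]) auto

lemma F_y_short_le_phiK_min:
  assumes "K \<ge> 2"
  shows "F (xK K, y_short K) \<le> phiK_min K"
  unfolding phiK_min_def phiK_def y_short_def
  using shortest_step(1)[OF assms] by (intro Max_ge) (auto intro: rev_image_eqI)

lemma phiK_min_le_phi: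
  assumes K: "K \<ge> 1" and x: "x \<in> X"
  shows "phiK_min K \<le> phi F f Y x"
proof -
  obtain y where y: "y \<in> LL_sol f Y x" "phi F f Y x = F (x, y)"
    using phi_attained[OF contF contf Y(3) S_ne[OF x]] by blast
  have stat: "y \<in> LL_stat grad Y x"
    using LL_sol_subset_LL_stat[OF grad_f Y(1)] y(1) by blast
  then have "phiK_min K \<le> phiK F Y grad alpha K x y"
    using min_K[OF K] x unfolding phiK_min_def LL_stat_def by blast
  also have "\<dots> = phi F f Y x"
    using phiK_stationary[OF Y(1,2,4) alpha_pos stat K] y(2) by simp
  finally show ?thesis .
qed

lemma phiK_min_le_stationary:
  assumes K: "K \<ge> 1" and x: "x \<in> X" and y: "y \<in> LL_stat grad Y x"
  shows "phiK_min K \<le> F (x, y)"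
  using min_K[OF K] x y phiK_stationary[OF Y(1,2,4) alpha_pos y K]
  unfolding phiK_min_def LL_stat_def by force

text \<open>\<open>M\<close> is twice a bound of \<open>\<bar>f\<bar>\<close> on \<open>X \<times> Y\<close>: by telescoping, the shortest of the
  steps \<open>1, \<dots>, K - 1\<close> has \<open>descent_rate * len\<^sup>2\<close> at most the average decrease of \<open>f\<close>.\<close>

lemma shortest_step_len_le:
  obtains M where "\<And>K. K \<ge> 2 \<Longrightarrow> descent_rate * (step_len K (shortest_step K))\<^sup>2 \<le> M / (real K - 1)"
proof -
  have "compact (f ` (X \<times> Y))"
    using compact_continuous_image[OF continuous_on_subset[OF contf] compact_Times[OF X Y(3)]] by auto
  then obtain M where "\<forall>v\<in>f ` (X \<times> Y). norm v \<le> M"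
    using compact_imp_bounded bounded_iff by blast
  then have M: "\<And>x y. x \<in> X \<Longrightarrow> y \<in> Y \<Longrightarrow> \<bar>f (x, y)\<bar> \<le> M"
    by force
  have "descent_rate * (step_len K (shortest_step K))\<^sup>2 \<le> 2 * M / (real K - 1)" if K: "K \<ge> 2" for K
  proof -
    define s where "s k = f (xK K, iter (xK K) (zK K) k)" for k
    have in_XY: "xK K \<in> X" "zK K \<in> Y"
      using min_K K by auto
    obtain k where k: "k \<in> {1..<K}"
      "descent_rate * (step_len K k)\<^sup>2 \<le> (s 1 - s K) / real (K - 1)"
      using ex_decrement_le_average[of 1 K "\<lambda>k. descent_rate * (step_len K k)\<^sup>2" s] K
        iter_decrease[OF in_XY] unfolding s_def step_len_def by auto
    have "descent_rate * (step_len K (shortest_step K))\<^sup>2 \<le> descent_rate * (step_len K k)\<^sup>2"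
      using shortest_step(2)[OF K k(1)] descent_rate_pos
      by (intro mult_left_mono power_mono) (auto simp: step_len_def)
    also have "\<dots> \<le> (s 1 - s K) / real (K - 1)"
      by (rule k(2))
    also have "\<dots> \<le> 2 * M / (real K - 1)"
    proof -
      have s_bound: "\<bar>s k\<bar> \<le> M" for k
        unfolding s_def by (rule M[OF in_XY(1) pgd_iter_in[OF Y(2,4) in_XY(2)]])
      then have "s 1 - s K \<le> 2 * M"
        using s_bound[of 1] s_bound[of K] unfolding abs_le_iff by linarith
      then show ?thesis
        using K by (simp add: of_nat_diff divide_right_mono)
    qed
    finally show ?thesis .
  qed
  then show ?thesis using that by blast
qed

lemma shortest_step_tendsto_0: "(\<lambda>K. step_len K (shortest_step K)) \<longlonglongrightarrow> 0"
proof -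
  obtain M where M: "\<And>K. K \<ge> 2 \<Longrightarrow> descent_rate * (step_len K (shortest_step K))\<^sup>2 \<le> M / (real K - 1)"
    using shortest_step_len_le by blast
  have "(\<lambda>K::nat. 1 / (real K - 1)) \<longlonglongrightarrow> 0"
    by real_asymp
  from tendsto_mult[OF tendsto_const[of M] this]
  have lim: "(\<lambda>K. M / (real K - 1) / descent_rate) \<longlonglongrightarrow> 0"
    by (intro tendsto_divide_zero) simp
  have ev: "eventually (\<lambda>K. (step_len K (shortest_step K))\<^sup>2 \<le> M / (real K - 1) / descent_rate) sequentially"
    using eventually_ge_at_top[of 2]
  proof eventually_elim
    case (elim K)
    show ?case
      by (subst pos_le_divide_eq[OF descent_rate_pos]) (use M[OF elim] in \<open>simp add: mult.commute\<close>)
  qed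
  have "(\<lambda>K. (step_len K (shortest_step K))\<^sup>2) \<longlonglongrightarrow> 0"
    by (rule tendsto_sandwich[OF _ ev tendsto_const lim]) simp
  from tendsto_real_sqrt[OF this] show ?thesis
    by (simp add: step_len_def)
qed

text \<open>Cluster points of \<open>(x\<^sub>K, y\<^sub>k\<^sub>(\<^sub>K\<^sub>))\<close>, with \<open>k(K)\<close> the shortest step, are
  stationary: the projected gradient step is continuous in the point and in the step size,
  and its displacement vanishes along the sequence.\<close>

lemma cluster_stationary:
  fixes r :: "nat \<Rightarrow> nat"
  assumes r: "strict_mono r"
  obtains s xb yb where "strict_mono s" "\<And>j. r (s j) \<ge> 2" "xb \<in> X" "yb \<in> LL_stat grad Y xb"
    "(\<lambda>j. xK (r (s j))) \<longlonglongrightarrow> xb" "(\<lambda>j. y_short (r (s j))) \<longlonglongrightarrow> yb"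
proof -
  define Q where "Q K = (xK K, y_short K, alpha (shortest_step K))" for K
  have r_ge: "r (j + 2) \<ge> 2" for j
    using seq_suble[OF r, of "j + 2"] by simp
  have "Q (r (j + 2)) \<in> X \<times> Y \<times> {alo..ahi}" for j
    using min_K[of "r (j + 2)"] y_short_in[OF r_ge] r_ge[of j] alpha by (simp add: Q_def)
  then have Q_in: "\<forall>j. Q (r (j + 2)) \<in> X \<times> Y \<times> {alo..ahi}"
    by blast
  have "seq_compact (X \<times> Y \<times> {alo..ahi})"
    by (intro compact_imp_seq_compact compact_Times X Y(3) compact_Icc)
  from seq_compactE[OF this Q_in] obtain l s0 where l: "l \<in> X \<times> Y \<times> {alo..ahi}" "strict_mono s0"
    "((\<lambda>j. Q (r (j + 2))) \<circ> s0) \<longlonglongrightarrow> l"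
    by blast
  define s where "s j = s0 j + 2" for j
  have s: "strict_mono s" "\<And>j. r (s j) \<ge> 2"
    using l(2) r_ge by (simp_all add: s_def strict_mono_def)
  have Q_lim: "(\<lambda>j. Q (r (s j))) \<longlonglongrightarrow> l"
    using l(3) by (simp add: s_def o_def)
  obtain xb yb ab where l_eq: "l = (xb, yb, ab)"
    by (cases l) auto
  have xb: "xb \<in> X" and ab: "ab > 0"
    using l(1) alo_pos by (auto simp: l_eq)
  have x_lim: "(\<lambda>j. xK (r (s j))) \<longlonglongrightarrow> xb" and y_lim: "(\<lambda>j. y_short (r (s j))) \<longlonglongrightarrow> yb"
    using tendsto_fst[OF Q_lim] tendsto_fst[OF tendsto_snd[OF Q_lim]] by (simp_all add: l_eq Q_def)
  define T where "T p = closest_point Y (fst (snd p) - snd (snd p) *\<^sub>R snd (grad (fst p, fst (snd p))))"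
    for p :: "'a \<times> 'b \<times> real"
  have "continuous_on UNIV T"
    unfolding T_def
    by (intro continuous_on_compose2[OF continuous_on_closest_point[OF Y(1,2,4)]]
          continuous_intros continuous_on_compose2[OF cont_grad]) auto
  then have T_lim: "(\<lambda>j. T (Q (r (s j)))) \<longlonglongrightarrow> T l"
    by (rule continuous_on_tendsto_compose[OF _ Q_lim]) auto
  have T_eq: "T (Q K) = y_short K + (iter (xK K) (zK K) (Suc (shortest_step K)) - y_short K)" for K
    by (simp add: T_def Q_def y_short_def)
  have "(\<lambda>j. iter (xK (r (s j))) (zK (r (s j))) (Suc (shortest_step (r (s j)))) - y_short (r (s j))) \<longlonglongrightarrow> 0"
    using LIMSEQ_subseq_LIMSEQ[OF shortest_step_tendsto_0 strict_mono_o[OF r s(1)]]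
    by (simp add: o_def step_len_def y_short_def tendsto_norm_zero_iff)
  from tendsto_add[OF y_lim this] have "(\<lambda>j. T (Q (r (s j)))) \<longlonglongrightarrow> yb + 0"
    unfolding T_eq .
  then have "T l = yb"
    using LIMSEQ_unique[OF T_lim] by simp
  then have "closest_point Y (yb - ab *\<^sub>R snd (grad (xb, yb))) = yb"
    by (simp add: T_def l_eq)
  then have "yb \<in> LL_stat grad Y xb"
    using LL_stat_iff_fixed_point[OF Y(1,2,4) ab, where y = yb and grad = grad and x = xb] by blast
  with s xb x_lim y_lim that show ?thesis by blast
qed

text \<open>Along a cluster point the bound \<open>F (x\<^sub>K, y\<^sub>k\<^sub>(\<^sub>K\<^sub>)) \<le> \<phi>\<^sub>K (x\<^sub>K, z\<^sub>K) \<le> F (x, y)\<close>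
  for stationary \<open>(x, y)\<close> passes to the limit, and assumption \<open>stat_opt\<close> turns the
  resulting stationary minimiser into a lower-level solution.\<close>

lemma cluster_optimal:
  fixes r :: "nat \<Rightarrow> nat"
  assumes r: "strict_mono r"
  obtains s xb where "strict_mono s" "xb \<in> X" "(\<lambda>j. xK (r (s j))) \<longlonglongrightarrow> xb"
    "\<And>x. x \<in> X \<Longrightarrow> phi F f Y xb \<le> phi F f Y x"
    "(\<lambda>j. phiK_min (r (s j))) \<longlonglongrightarrow> phi F f Y xb"
proof -
  obtain s xb yb where s: "strict_mono s" "\<And>j. r (s j) \<ge> 2" "xb \<in> X" "yb \<in> LL_stat grad Y xb"
    "(\<lambda>j. xK (r (s j))) \<longlonglongrightarrow> xb" "(\<lambda>j. y_short (r (s j))) \<longlonglongrightarrow> yb"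
    by (rule cluster_stationary[OF r]) blast
  have K_ge_1: "r (s j) \<ge> 1" for j
    using s(2)[of j] by linarith
  have F_lim: "(\<lambda>j. F (xK (r (s j)), y_short (r (s j)))) \<longlonglongrightarrow> F (xb, yb)"
    by (rule continuous_on_tendsto_compose[OF contF tendsto_Pair[OF s(5,6)]]) auto
  have upper: "F (xK (r (s j)), y_short (r (s j))) \<le> phiK_min (r (s j))" for j
    by (rule F_y_short_le_phiK_min[OF s(2)])
  have "F (xb, yb) \<le> F (x, y)" if "x \<in> X" "y \<in> LL_stat grad Y x" for x y
    using order.trans[OF upper phiK_min_le_stationary[OF K_ge_1 that]]
    by (intro tendsto_upperbound[OF F_lim]) auto
  then have "yb \<in> LL_sol f Y xb"
    using stat_opt[OF s(3,4)] by blast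
  then have phi_xb: "phi F f Y xb \<le> F (xb, yb)"
    using phi_attained[OF contF contf Y(3) S_ne[OF s(3)]] by metis
  have F_le_phi: "F (xb, yb) \<le> phi F f Y x" if "x \<in> X" for x
    using order.trans[OF upper phiK_min_le_phi[OF K_ge_1 that]]
    by (intro tendsto_upperbound[OF F_lim]) auto
  have "(\<lambda>j. phiK_min (r (s j))) \<longlonglongrightarrow> phi F f Y xb"
  proof (rule tendsto_sandwich[OF _ _ _ tendsto_const])
    show "(\<lambda>j. F (xK (r (s j)), y_short (r (s j)))) \<longlonglongrightarrow> phi F f Y xb"
      using F_lim phi_xb F_le_phi[OF s(3)] by simp
  qed (use upper phiK_min_le_phi[OF K_ge_1 s(3)] in auto)
  moreover have "phi F f Y xb \<le> phi F f Y x" if "x \<in> X" for x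
    using phi_xb F_le_phi[OF that] by linarith
  ultimately show ?thesis
    using that s(1,3,5) by blast
qed

lemma limit_points_minimize_phi:
  fixes r :: "nat \<Rightarrow> nat"
  assumes "strict_mono r" "(xK \<circ> r) \<longlonglongrightarrow> xb"
  shows "xb \<in> X \<and> (\<forall>x\<in>X. phi F f Y xb \<le> phi F f Y x)"
proof -
  obtain s x' where s: "strict_mono s" "x' \<in> X" "(\<lambda>j. xK (r (s j))) \<longlonglongrightarrow> x'"
    "\<And>x. x \<in> X \<Longrightarrow> phi F f Y x' \<le> phi F f Y x"
    "(\<lambda>j. phiK_min (r (s j))) \<longlonglongrightarrow> phi F f Y x'"
    by (rule cluster_optimal[OF assms(1)]) blast
  have "(\<lambda>j. xK (r (s j))) \<longlonglongrightarrow> xb"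
    using LIMSEQ_subseq_LIMSEQ[OF assms(2) s(1)] by (simp add: o_def)
  then have "xb = x'"
    using s(3) by (rule LIMSEQ_unique)
  with s show ?thesis by blast
qed

lemma phiK_min_tendsto: "phiK_min \<longlonglongrightarrow> Inf (phi F f Y ` X)"
proof (rule LIMSEQ_if_subseq_subseq)
  fix r :: "nat \<Rightarrow> nat" assume r: "strict_mono r"
  obtain s xb where s: "strict_mono s" "xb \<in> X" "(\<lambda>j. xK (r (s j))) \<longlonglongrightarrow> xb"
    "\<And>x. x \<in> X \<Longrightarrow> phi F f Y xb \<le> phi F f Y x" "(\<lambda>j. phiK_min (r (s j))) \<longlonglongrightarrow> phi F f Y xb"
    by (rule cluster_optimal[OF r]) blast
  have "Inf (phi F f Y ` X) = phi F f Y xb"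
    using s(2,4) by (intro cInf_eq_minimum) auto
  with s show "\<exists>s. strict_mono s \<and> (phiK_min \<circ> r \<circ> s) \<longlonglongrightarrow> Inf (phi F f Y ` X)"
    by (auto simp: o_def)
qed

lemma Inf_phiK_eq_phiK_min:
  assumes "K \<ge> 1"
  shows "Inf {phiK F Y grad alpha K x z | x z. x \<in> X \<and> z \<in> Y} = phiK_min K"
  using min_K[OF assms] unfolding phiK_min_def by (intro cInf_eq_minimum) auto

lemma Inf_phiK_tendsto: "(\<lambda>K. Inf {phiK F Y grad alpha K x z | x z. x \<in> X \<and> z \<in> Y}) \<longlonglongrightarrow> Inf (phi F f Y ` X)"
proof -
  have "eventually (\<lambda>K. phiK_min K = Inf {phiK F Y grad alpha K x z | x z. x \<in> X \<and> z \<in> Y}) sequentially"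
    using eventually_ge_at_top[of 1] by eventually_elim (simp add: Inf_phiK_eq_phiK_min)
  from tendsto_cong[OF this] show ?thesis
    using phiK_min_tendsto by simp
qed

end

theorem theorem3p1:
  fixes F f :: "'a::euclidean_space \<times> 'b::euclidean_space \<Rightarrow> real"
    and grad :: "'a \<times> 'b \<Rightarrow> 'a \<times> 'b"
    and X :: "'a set" and Y :: "'b set"
    and Lf alo ahi :: real and alpha :: "nat \<Rightarrow> real"
    and xK :: "nat \<Rightarrow> 'a" and zK :: "nat \<Rightarrow> 'b"
  assumes contF: "continuous_on UNIV F"
    and contf: "continuous_on UNIV f"
    and grad_f: "\<And>p. GDERIV f p :> grad p"
    and cont_grad: "continuous_on UNIV grad"
    and Lf_pos: "Lf > 0"
    and Lip: "\<And>x y1 y2. x \<in> X \<Longrightarrow>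
                 norm (snd (grad (x, y1)) - snd (grad (x, y2))) \<le> Lf * norm (y1 - y2)"
    and X: "X \<noteq> {}" "convex X" "compact X"
    and Y: "Y \<noteq> {}" "convex Y" "compact Y"
    and S_ne: "\<And>x. x \<in> X \<Longrightarrow> LL_sol f Y x \<noteq> {}"
    and stat_opt: "\<And>xb yb. xb \<in> X \<Longrightarrow> yb \<in> LL_stat grad Y xb \<Longrightarrow>
                     (\<forall>x\<in>X. \<forall>y\<in>LL_stat grad Y x. F (xb, yb) \<le> F (x, y)) \<Longrightarrow>
                     yb \<in> LL_sol f Y xb"
    and step: "0 < alo" "alo \<le> ahi" "ahi < 2 / Lf" "\<And>k. alo \<le> alpha k \<and> alpha k \<le> ahi"
    and min_K: "\<And>K. K \<ge> 1 \<Longrightarrow> xK K \<in> X \<and> zK K \<in> Y \<and>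
                  (\<forall>x\<in>X. \<forall>z\<in>Y. phiK F Y grad alpha K (xK K) (zK K) \<le> phiK F Y grad alpha K x z)"
  shows "(\<forall>xb r. strict_mono r \<longrightarrow> (xK \<circ> r) \<longlonglongrightarrow> xb \<longrightarrow>
              xb \<in> X \<and> (\<forall>x\<in>X. phi F f Y xb \<le> phi F f Y x))
         \<and> (\<lambda>K. Inf {phiK F Y grad alpha K x z | x z. x \<in> X \<and> z \<in> Y})
              \<longlonglongrightarrow> Inf (phi F f Y ` X)"
proof -
  interpret pgd_bilevel F f grad X Y Lf alo ahi alpha xK zK
    by (unfold_locales; (fact assms)?) (use step(4) compact_imp_closed[OF Y(3)] in auto)
  show ?thesis
    using limit_points_minimize_phi Inf_phiK_tendsto by blast
qed

end
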